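(* Let $z\in\mathbb{R}^n$, $\lambda_1,\lambda_2>0$, $l\le0\le u$ in $\mathbb{R}^n$, $\omega_i(\alpha)=\lambda_2|\alpha|_0+\delta_{[l_i,u_i]}(\alpha)$, $H(0)=-\lambda_1$, $H(s)=\min_{y\in\mathbb{R}^s}\{\frac12\|y-z_{1:s}\|^2+\lambda_1\sum_{j=1}^{s-1}|y_j-y_{j+1}|_0+\sum_{j=1}^s\omega_j(y_j)\}$ for $s\in[n]$, and $P_s(i,\alpha)=H(i)+\frac12\|\alpha\mathbf{1}-z_{i+1:s}\|^2+\sum_{j=i+1}^s\omega_j(\alpha)+\lambda_1$ for $i\in[0\!:\!s-1]$, $\alpha\in\mathbb{R}$. For each $s\in[n]$ let $P_s^*(\alpha)=\min_{i\in[0:s-1]}P_s(i,\alpha)$. Then: (i) for all $\alpha\in\mathbb{R}$, $P_1^*(\alpha)=\frac12(\alpha-z_1)^2+\omega_1(\alpha)$ and, for $s\in[2\!:\!n]$, $$P_s^*(\alpha)=\min\Big\{P_{s-1}^*(\alpha),\ \min_{\alpha'\in\mathbb{R}}P_{s-1}^*(\alpha')+\lambda_1\Big\}+\tfrac12(\alpha-z_s)^2+\omega_s(\alpha);$$ (ii) let $\mathcal{R}_1^0=\mathbb{R}$ and, for $s\in[2\!:\!n]$, $\mathcal{R}_s^{s-1}=\{\alpha\in\mathbb{R}: P_{s-1}^*(\alpha)\ge\min_{\alpha'\in\mathbb{R}}P_{s-1}^*(\alpha')+\lambda_1\}$ and $\mathcal{R}_s^i=\mathcal{R}_{s-1}^i\cap(\mathcal{R}_s^{s-1})^c$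 for $i\in[0\!:\!s-2]$. Then (a) for each $s\in[2\!:\!n]$, $\bigcup_{i\in[0:s-1]}\mathcal{R}_s^i=\mathbb{R}$ and $\mathcal{R}_s^i\cap\mathcal{R}_s^j=\emptyset$ for all $i\neq j$ in $[0\!:\!s-1]$; (b) for each $s\in[n]$ and $i\in[0\!:\!s-1]$, $P_s^*(\alpha)=P_s(i,\alpha)$ whenever $\alpha\in\mathcal{R}_s^i$.
   Context: $|t|_0=0$ if $t=0$ and $1$ otherwise; $\delta_{[a,b]}$ is the indicator of $[a,b]$; $[j\!:\!k]=\{j,\dots,k\}$, $[n]=[1\!:\!n]$, $z_{j:k}=(z_j,\dots,z_k)$, $\mathbf 1$ the all-ones vector; $(\cdot)^c$ denotes complement in $\mathbb{R}$. *)

theory Defs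
  imports "HOL-Analysis.Analysis"
begin

definition l0 :: "real \<Rightarrow> real" where
  "l0 t = (if t = 0 then 0 else 1)"

definition delta_ind :: "real \<Rightarrow> real \<Rightarrow> real \<Rightarrow> ereal" where
  "delta_ind a b x = (if a \<le> x \<and> x \<le> b then 0 else \<infinity>)"

definition omega :: "(nat \<Rightarrow> real) \<Rightarrow> (nat \<Rightarrow> real) \<Rightarrow> real \<Rightarrow> nat \<Rightarrow> real \<Rightarrow> ereal" where
  "omega l u lam2 i a = ereal (lam2 * l0 a) + delta_ind (l i) (u i) a"

definition H :: "(nat \<Rightarrow> real) \<Rightarrow> (nat \<Rightarrow> real) \<Rightarrow> (nat \<Rightarrow> real) \<Rightarrow> real \<Rightarrow> real \<Rightarrow> nat \<Rightarrow> ereal" where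
  "H z l u lam1 lam2 s =
     (if s = 0 then ereal (- lam1)
      else (INF y :: nat \<Rightarrow> real.
              ereal ((1/2) * (\<Sum>j=1..s. (y j - z j)^2)
                     + lam1 * (\<Sum>j=1..s-1. l0 (y j - y (j+1))))
              + (\<Sum>j=1..s. omega l u lam2 j (y j))))"

definition P :: "(nat \<Rightarrow> real) \<Rightarrow> (nat \<Rightarrow> real) \<Rightarrow> (nat \<Rightarrow> real) \<Rightarrow> real \<Rightarrow> real \<Rightarrow> nat \<Rightarrow> nat \<Rightarrow> real \<Rightarrow> ereal" where
  "P z l u lam1 lam2 s i a =
     H z l u lam1 lam2 i + ereal ((1/2) * (\<Sum>j=i+1..s. (a - z j)^2))
     + (\<Sum>j=i+1..s. omega l u lam2 j a) + ereal lam1"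

definition Pstar :: "(nat \<Rightarrow> real) \<Rightarrow> (nat \<Rightarrow> real) \<Rightarrow> (nat \<Rightarrow> real) \<Rightarrow> real \<Rightarrow> real \<Rightarrow> nat \<Rightarrow> real \<Rightarrow> ereal" where
  "Pstar z l u lam1 lam2 s a = Min ((\<lambda>i. P z l u lam1 lam2 s i a) ` {0..<s})"

text \<open>Regions R_s^i (values for indices outside i in [0:s-1] are irrelevant conventions).\<close>
fun R :: "(nat \<Rightarrow> real) \<Rightarrow> (nat \<Rightarrow> real) \<Rightarrow> (nat \<Rightarrow> real) \<Rightarrow> real \<Rightarrow> real \<Rightarrow> nat \<Rightarrow> nat \<Rightarrow> real set" where
  "R z l u lam1 lam2 0 i = {}"
| "R z l u lam1 lam2 (Suc 0) i = (if i = 0 then UNIV else {})"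
| "R z l u lam1 lam2 (Suc (Suc m)) i =
     (let T = {a. Pstar z l u lam1 lam2 (Suc m) a \<ge>
                  (INF a'. Pstar z l u lam1 lam2 (Suc m) a') + ereal lam1}
      in if i = Suc m then T
         else if i < Suc m then R z l u lam1 lam2 (Suc m) i \<inter> - T
         else {})"

end

theory Submission imports Defs begin

text \<open>
  Everything follows from the Bellman identity \<open>inf\<^sub>\<alpha> P\<^sub>s\<^sup>*(\<alpha>) = H(s)\<close>.
  Extending an optimal \<open>y \<in> \<real>\<^sup>i\<close> by the constant block \<open>\<alpha>\<close> on \<open>[i+1:s]\<close> costs at most
  one extra jump, so \<open>H(s) \<le> P\<^sub>s(i,\<alpha>)\<close>; conversely, splitting any \<open>y \<in> \<real>\<^sup>s\<close> at its last
  jump \<open>i\<close> shows that its objective is at least \<open>P\<^sub>s(i, y\<^sub>s)\<close>. Given the identity, the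
  candidates \<open>i < s - 1\<close> of \<open>P\<^sub>s\<^sup>*\<close> are those of \<open>P\<^sub>s\<^sub>-\<^sub>1\<^sup>*\<close> plus the new stage cost, and the
  new candidate \<open>i = s - 1\<close> is \<open>H(s-1) + \<lambda>\<^sub>1\<close> plus it; the regions record which of the two wins.
\<close>

lemma sum_atLeastAtMost_split:
  fixes f :: "nat \<Rightarrow> 'a::comm_monoid_add"
  assumes "i \<le> t"
  shows "sum f {1..t} = sum f {1..i} + sum f {Suc i..t}"
  using sum.ub_add_nat[of 1 i f "t - i"] assms by simp

lemma eq_last_if_steps_eq:
  assumes "\<And>j. m \<le> j \<Longrightarrow> j < t \<Longrightarrow> y j = y (Suc j)" and "m \<le> j" "j \<le> t"
  shows "y j = y t"
  using assms(3,2)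
proof (induction j rule: inc_induct)
  case (step k)
  then show ?case using assms(1)[of k] by simp
qed simp

definition jumps :: "(nat \<Rightarrow> real) \<Rightarrow> nat \<Rightarrow> real" where
  "jumps y t = (\<Sum>j=1..t-1. l0 (y j - y (Suc j)))"

lemma jumps_nonneg: "0 \<le> jumps y t"
  unfolding jumps_def l0_def by (intro sum_nonneg) auto

lemma jumps_split:
  assumes "1 \<le> i" "i \<le> t"
  shows "jumps y t = jumps y i + (\<Sum>j=i..t-1. l0 (y j - y (Suc j)))"
  using sum.ub_add_nat[of 1 "i - 1" "\<lambda>j. l0 (y j - y (Suc j))" "t - i"] assms
  by (simp add: jumps_def)

lemma jumps_eq_0:
  assumes "\<And>j. 1 \<le> j \<Longrightarrow> j < t \<Longrightarrow> y j = y (Suc j)"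
  shows "jumps y t = 0"
  unfolding jumps_def using assms by (intro sum.neutral) (auto simp: l0_def)

lemma jumps_last_block:
  assumes "1 \<le> i" "i < t" "y i \<noteq> y (Suc i)"
    and "\<And>j. i < j \<Longrightarrow> j < t \<Longrightarrow> y j = y (Suc j)"
  shows "jumps y t = jumps y i + 1"
proof -
  have "(\<Sum>j=i..t-1. l0 (y j - y (Suc j))) = (\<Sum>j\<in>{i..t-1} \<inter> {i}. l0 (y j - y (Suc j)))"
  proof (rule sum.mono_neutral_right)
    show "\<forall>j\<in>{i..t-1} - {i..t-1} \<inter> {i}. l0 (y j - y (Suc j)) = 0"
    proof
      fix j assume "j \<in> {i..t-1} - {i..t-1} \<inter> {i}"
      then have "i < j" "j < t" using assms(2) by auto
      then show "l0 (y j - y (Suc j)) = 0" using assms(4) by (simp add: l0_def)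
    qed
  qed auto
  also have "\<dots> = 1"
    using assms(2,3) by (simp add: l0_def)
  finally show ?thesis using jumps_split[of i t y] assms(1,2) by simp
qed

lemma jumps_extend_le:
  assumes "i \<le> t"
  shows "jumps (\<lambda>j. if j \<le> i then y j else a) t \<le> jumps y i + 1"
proof (cases "i = 0")
  case True
  then show ?thesis by (simp add: jumps_eq_0 jumps_nonneg)
next
  case False
  let ?y = "\<lambda>j. if j \<le> i then y j else a"
  have "jumps ?y i = jumps y i"
    unfolding jumps_def by (intro sum.cong) auto
  moreover have "(\<Sum>j=i..t-1. l0 (?y j - ?y (Suc j))) = (\<Sum>j\<in>{i..t-1} \<inter> {i}. l0 (?y j - ?y (Suc j)))"
    by (intro sum.mono_neutral_right) (auto simp: l0_def)
  moreover have "\<dots> \<le> 1"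
    by (cases "i \<le> t - 1") (auto simp: l0_def)
  ultimately show ?thesis using jumps_split[of i t ?y] assms False by simp
qed

text \<open>
  The objective of \<open>H\<close> with a general nonnegative stage cost \<open>g j\<close> (in the theorem
  \<open>g j \<alpha> = (\<alpha> - z\<^sub>j)\<^sup>2/2 + \<omega>\<^sub>j(\<alpha>)\<close>): \<open>opt\<close>, \<open>block_cost\<close> and \<open>min_block_cost\<close>
  are \<open>H\<close>, \<open>P\<^sub>t\<close> and \<open>P\<^sub>t\<^sup>*\<close>.
\<close>

locale l0_segmentation =
  fixes g :: "nat \<Rightarrow> real \<Rightarrow> ereal" and lam :: real
  assumes g_nonneg: "0 \<le> g j a" and lam_nonneg: "0 \<le> lam"
begin

definition cost :: "nat \<Rightarrow> (nat \<Rightarrow> real) \<Rightarrow> ereal" where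
  "cost t y = (\<Sum>j=1..t. g j (y j)) + ereal (lam * jumps y t)"

definition opt :: "nat \<Rightarrow> ereal" where
  \<comment> \<open>\<open>opt 0 = -lam\<close> cancels the jump charge of \<open>block_cost t 0\<close>, the cost of a constant \<open>y\<close>\<close>
  "opt t = (if t = 0 then ereal (- lam) else (INF y. cost t y))"

definition block_cost :: "nat \<Rightarrow> nat \<Rightarrow> real \<Rightarrow> ereal" where
  "block_cost t i a = opt i + (\<Sum>j=i+1..t. g j a) + ereal lam"

definition min_block_cost :: "nat \<Rightarrow> real \<Rightarrow> ereal" where
  "min_block_cost t a = Min ((\<lambda>i. block_cost t i a) ` {0..<t})"

lemma sum_g_nonneg: "0 \<le> (\<Sum>j\<in>A. g j (f j))"
  by (simp add: g_nonneg sum_nonneg)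

lemma cost_nonneg: "0 \<le> cost t y"
  unfolding cost_def
  by (intro add_nonneg_nonneg sum_g_nonneg) (simp add: jumps_nonneg lam_nonneg)

lemma opt_le_cost: "t \<noteq> 0 \<Longrightarrow> opt t \<le> cost t y"
  by (simp add: opt_def INF_lower)

lemma cost_single_block:
  assumes "\<And>j. 1 \<le> j \<Longrightarrow> j < t \<Longrightarrow> y j = y (Suc j)"
  shows "cost t y = (\<Sum>j=1..t. g j (y t))"
proof -
  have "(\<Sum>j=1..t. g j (y j)) = (\<Sum>j=1..t. g j (y t))"
  proof (rule sum.cong)
    fix j assume "j \<in> {1..t}"
    then have "y j = y t" by (intro eq_last_if_steps_eq[of 1 t y, OF assms]) auto
    then show "g j (y j) = g j (y t)" by simp
  qed simp
  then show ?thesis by (simp add: cost_def jumps_eq_0[of t y, OF assms])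
qed

lemma cost_last_block:
  assumes "1 \<le> i" "i < t" "y i \<noteq> y (Suc i)"
    and "\<And>j. i < j \<Longrightarrow> j < t \<Longrightarrow> y j = y (Suc j)"
  shows "cost t y = cost i y + (\<Sum>j=i+1..t. g j (y t)) + ereal lam"
proof -
  have "(\<Sum>j=i+1..t. g j (y j)) = (\<Sum>j=i+1..t. g j (y t))"
  proof (rule sum.cong)
    fix j assume "j \<in> {i+1..t}"
    then have "y j = y t" using eq_last_if_steps_eq[of "Suc i" t y j] assms(4) by auto
    then show "g j (y j) = g j (y t)" by simp
  qed simp
  then have "cost t y = (\<Sum>j=1..i. g j (y j)) + (\<Sum>j=i+1..t. g j (y t)) + ereal (lam * (jumps y i + 1))"
    using sum_atLeastAtMost_split[of i t "\<lambda>j. g j (y j)"] assms(2)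
    by (simp add: cost_def jumps_last_block[of i t y, OF assms])
  then show ?thesis
    by (simp add: cost_def distrib_left ac_simps flip: plus_ereal.simps)
qed

lemma cost_extend_le:
  assumes "i \<le> t"
  shows "cost t (\<lambda>j. if j \<le> i then y j else a) \<le> cost i y + (\<Sum>j=i+1..t. g j a) + ereal lam"
proof -
  let ?y = "\<lambda>j. if j \<le> i then y j else a"
  have "cost t ?y = (\<Sum>j=1..i. g j (y j)) + (\<Sum>j=i+1..t. g j a) + ereal (lam * jumps ?y t)"
    using sum_atLeastAtMost_split[of i t "\<lambda>j. g j (?y j)"] assms by (simp add: cost_def)
  also have "\<dots> \<le> (\<Sum>j=1..i. g j (y j)) + (\<Sum>j=i+1..t. g j a) + (ereal (lam * jumps y i) + ereal lam)"
    using mult_left_mono[OF jumps_extend_le[OF assms] lam_nonneg]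
    by (intro add_left_mono) (simp add: distrib_left)
  also have "\<dots> = cost i y + (\<Sum>j=i+1..t. g j a) + ereal lam"
    by (simp add: cost_def ac_simps flip: plus_ereal.simps)
  finally show ?thesis .
qed

lemma block_cost_0: "block_cost t 0 a = (\<Sum>j=1..t. g j a)"
proof -
  have "0 \<le> (\<Sum>j=1..t. g j a)" by (rule sum_g_nonneg)
  then show ?thesis
    by (cases "\<Sum>j=1..t. g j a") (simp_all add: block_cost_def opt_def)
qed

lemma block_cost_Suc: "i < s \<Longrightarrow> block_cost (Suc s) i a = block_cost s i a + g (Suc s) a"
  by (simp add: block_cost_def ac_simps)

lemma block_cost_Suc_self: "block_cost (Suc s) s a = opt s + ereal lam + g (Suc s) a"
  by (simp add: block_cost_def ac_simps)

lemma opt_le_block_cost: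
  assumes "i < t"
  shows "opt t \<le> block_cost t i a"
proof (cases "i = 0")
  case True
  have "opt t \<le> cost t (\<lambda>_. a)"
    using assms by (intro opt_le_cost) simp
  also have "\<dots> = block_cost t 0 a"
    by (simp add: cost_single_block block_cost_0)
  finally show ?thesis using True by simp
next
  case False
  let ?S = "(\<Sum>j=i+1..t. g j a) + ereal lam"
  have "opt t \<le> (INF y. cost i y + ?S)"
  proof (rule INF_greatest)
    fix y
    have "opt t \<le> cost t (\<lambda>j. if j \<le> i then y j else a)"
      using assms by (intro opt_le_cost) simp
    also have "\<dots> \<le> cost i y + ?S"
      using cost_extend_le[of i t y a] assms by (simp add: add.assoc)
    finally show "opt t \<le> cost i y + ?S" .
  qed
  also have "\<dots> = (INF y. cost i y) + ?S"
  proof (rule INF_ereal_add_left)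
    have "0 \<le> ?S" by (intro add_nonneg_nonneg sum_g_nonneg) (simp add: lam_nonneg)
    then show "?S \<noteq> -\<infinity>" by auto
  qed (auto simp: cost_nonneg)
  also have "\<dots> = block_cost t i a"
    using False by (simp add: block_cost_def opt_def add.assoc)
  finally show ?thesis .
qed

lemma block_cost_le_cost:
  assumes "1 \<le> t"
  shows "\<exists>i<t. block_cost t i (y t) \<le> cost t y"
proof (cases "\<exists>j\<in>{1..<t}. y j \<noteq> y (Suc j)")
  case False
  then have "cost t y = block_cost t 0 (y t)"
    using cost_single_block[of t y] by (simp add: block_cost_0)
  then show ?thesis using assms by (intro exI[of _ 0]) simp
next
  case True
  define J where "J = {j\<in>{1..<t}. y j \<noteq> y (Suc j)}"
  define i where "i = Max J"
  have "finite J" "J \<noteq> {}" using True by (auto simp: J_def)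
  then have "i \<in> J" unfolding i_def by (rule Max_in)
  then have i: "1 \<le> i" "i < t" "y i \<noteq> y (Suc i)" by (auto simp: J_def)
  have const: "y j = y (Suc j)" if "i < j" "j < t" for j
  proof (rule ccontr)
    assume "y j \<noteq> y (Suc j)"
    then have "j \<in> J" using that i(1) by (simp add: J_def)
    then have "j \<le> i" unfolding i_def using \<open>finite J\<close> by simp
    then show False using that(1) by simp
  qed
  have "block_cost t i (y t) \<le> cost i y + (\<Sum>j=i+1..t. g j (y t)) + ereal lam"
    unfolding block_cost_def using i(1) by (intro add_right_mono opt_le_cost) simp
  also have "\<dots> = cost t y"
    by (rule cost_last_block[of i t y, OF i const, symmetric])
  finally show ?thesis using i(2) by blast
qed

lemma min_block_cost_le: "i < t \<Longrightarrow> min_block_cost t a \<le> block_cost t i a"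
  unfolding min_block_cost_def by (rule Min_le) auto

lemma min_block_cost_attained:
  assumes "1 \<le> t"
  obtains i where "i < t" "min_block_cost t a = block_cost t i a"
proof -
  have "min_block_cost t a \<in> (\<lambda>i. block_cost t i a) ` {0..<t}"
    unfolding min_block_cost_def using assms by (intro Min_in) auto
  then show ?thesis using that by auto
qed

theorem INF_min_block_cost:
  assumes "1 \<le> t"
  shows "(INF a. min_block_cost t a) = opt t"
proof (rule antisym)
  show "opt t \<le> (INF a. min_block_cost t a)"
  proof (rule INF_greatest)
    fix a
    obtain i where "i < t" "min_block_cost t a = block_cost t i a"
      using min_block_cost_attained[OF assms] .
    then show "opt t \<le> min_block_cost t a" by (simp add: opt_le_block_cost)
  qed
  have "(INF a. min_block_cost t a) \<le> cost t y" for y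
  proof -
    obtain i where "i < t" "block_cost t i (y t) \<le> cost t y"
      using block_cost_le_cost[OF assms] by blast
    then have "min_block_cost t (y t) \<le> cost t y"
      using min_block_cost_le order_trans by blast
    then show ?thesis by (rule INF_lower2[OF UNIV_I])
  qed
  then show "(INF a. min_block_cost t a) \<le> opt t"
    using assms by (simp add: opt_def le_INF_iff)
qed

lemma min_block_cost_1: "min_block_cost 1 a = g 1 a"
  by (simp add: min_block_cost_def block_cost_0)

lemma min_block_cost_Suc:
  assumes "1 \<le> s"
  shows "min_block_cost (Suc s) a = min (min_block_cost s a) (opt s + ereal lam) + g (Suc s) a"
proof -
  define h where "h i = (if i = s then opt s + ereal lam else block_cost s i a)" for i
  have "(\<lambda>i. block_cost (Suc s) i a) ` {0..<Suc s} = (\<lambda>i. h i + g (Suc s) a) ` {0..<Suc s}"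
    by (intro image_cong) (auto simp: h_def block_cost_Suc block_cost_Suc_self)
  also have "\<dots> = (\<lambda>x. x + g (Suc s) a) ` h ` {0..<Suc s}"
    by (simp add: image_image)
  finally have "min_block_cost (Suc s) a = Min (h ` {0..<Suc s}) + g (Suc s) a"
    unfolding min_block_cost_def
    by (simp add: mono_Min_commute[symmetric] monoI add_right_mono)
  also have "h ` {0..<Suc s} = insert (opt s + ereal lam) ((\<lambda>i. block_cost s i a) ` {0..<s})"
    by (auto simp: h_def atLeast0_lessThan_Suc)
  also have "Min \<dots> = min (opt s + ereal lam) (min_block_cost s a)"
    using assms by (simp add: min_block_cost_def)
  finally show ?thesis by (simp add: min.commute)
qed

lemma min_block_cost_Suc_new_block:
  assumes "1 \<le> s" "opt s + ereal lam \<le> min_block_cost s a"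
  shows "min_block_cost (Suc s) a = block_cost (Suc s) s a"
  using assms by (simp add: min_block_cost_Suc min_absorb2 block_cost_Suc_self)

lemma min_block_cost_Suc_old_block:
  assumes "1 \<le> s" "i < s" "min_block_cost s a = block_cost s i a"
    and "min_block_cost s a \<le> opt s + ereal lam"
  shows "min_block_cost (Suc s) a = block_cost (Suc s) i a"
  using assms by (simp add: min_block_cost_Suc min_absorb1 block_cost_Suc)

end

lemma UN_R: "(\<Union>i\<in>{0..<Suc m}. R z l u lam1 lam2 (Suc m) i) = UNIV"
proof (induction m)
  case (Suc m)
  have "x \<in> (\<Union>i\<in>{0..<Suc (Suc m)}. R z l u lam1 lam2 (Suc (Suc m)) i)" for x
  proof (cases "x \<in> R z l u lam1 lam2 (Suc (Suc m)) (Suc m)")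
    case True
    then show ?thesis by (intro UN_I[of "Suc m"]) simp_all
  next
    case False
    obtain i where "i < Suc m" "x \<in> R z l u lam1 lam2 (Suc m) i"
      using Suc.IH by (metis UNIV_I UN_E atLeastLessThan_iff)
    with False have "x \<in> R z l u lam1 lam2 (Suc (Suc m)) i" by (simp add: Let_def)
    then show ?thesis using \<open>i < Suc m\<close> by (intro UN_I[of i]) simp_all
  qed
  then show ?case by blast
qed simp

lemma R_index_unique:
  "i < Suc m \<Longrightarrow> j < Suc m \<Longrightarrow> a \<in> R z l u lam1 lam2 (Suc m) i \<Longrightarrow> a \<in> R z l u lam1 lam2 (Suc m) j
   \<Longrightarrow> i = j"
proof (induction m arbitrary: i j)
  case (Suc m)
  consider "i = Suc m" | "j = Suc m" | "i < Suc m" "j < Suc m"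
    using Suc.prems(1,2) by linarith
  then show ?case
  proof cases
    case 3
    then show ?thesis using Suc.IH[of i j] Suc.prems(3,4) by (auto simp: Let_def)
  qed (use Suc.prems in \<open>auto simp: Let_def split: if_splits\<close>)
qed simp

definition stage_cost :: "(nat \<Rightarrow> real) \<Rightarrow> (nat \<Rightarrow> real) \<Rightarrow> (nat \<Rightarrow> real) \<Rightarrow> real \<Rightarrow> nat \<Rightarrow> real \<Rightarrow> ereal" where
  "stage_cost z l u lam2 j a = ereal ((1/2) * (a - z j)^2) + omega l u lam2 j a"

context
  fixes z l u :: "nat \<Rightarrow> real" and lam1 lam2 :: real
  assumes lam1_nonneg: "0 \<le> lam1" and lam2_nonneg: "0 \<le> lam2"
begin

interpretation seg: l0_segmentation "stage_cost z l u lam2" lam1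
  by unfold_locales
    (auto simp: stage_cost_def omega_def delta_ind_def l0_def lam1_nonneg lam2_nonneg)

lemma H_eq_opt: "H z l u lam1 lam2 = seg.opt"
  unfolding fun_eq_iff H_def seg.opt_def seg.cost_def
  by (simp add: stage_cost_def jumps_def sum.distrib ac_simps sum_divide_distrib flip: plus_ereal.simps)

lemma P_eq_block_cost: "P z l u lam1 lam2 = seg.block_cost"
  unfolding fun_eq_iff P_def seg.block_cost_def H_eq_opt
  by (simp add: stage_cost_def sum.distrib sum_divide_distrib ac_simps)

lemma Pstar_eq_min_block_cost: "Pstar z l u lam1 lam2 = seg.min_block_cost"
  unfolding fun_eq_iff Pstar_def seg.min_block_cost_def P_eq_block_cost by simp

lemma Pstar_1: "Pstar z l u lam1 lam2 1 a = stage_cost z l u lam2 1 a"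
  unfolding Pstar_eq_min_block_cost by (rule seg.min_block_cost_1)

lemma INF_Pstar: "1 \<le> s \<Longrightarrow> (INF a. Pstar z l u lam1 lam2 s a) = H z l u lam1 lam2 s"
  by (simp add: Pstar_eq_min_block_cost H_eq_opt seg.INF_min_block_cost)

lemma Pstar_Suc:
  assumes "1 \<le> s"
  shows "Pstar z l u lam1 lam2 (Suc s) a =
    min (Pstar z l u lam1 lam2 s a) ((INF a'. Pstar z l u lam1 lam2 s a') + ereal lam1)
    + stage_cost z l u lam2 (Suc s) a"
  unfolding INF_Pstar[OF assms] unfolding H_eq_opt Pstar_eq_min_block_cost
  by (rule seg.min_block_cost_Suc[OF assms])

lemma Pstar_eq_P_on_R:
  "i < Suc m \<Longrightarrow> a \<in> R z l u lam1 lam2 (Suc m) i \<Longrightarrow> Pstar z l u lam1 lam2 (Suc m) a = P z l u lam1 lam2 (Suc m) i a"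
proof (induction m arbitrary: i)
  case 0
  then show ?case by (simp add: Pstar_def)
next
  case (Suc m)
  have INF: "(INF a'. seg.min_block_cost (Suc m) a') = seg.opt (Suc m)"
    by (simp add: seg.INF_min_block_cost)
  show ?case
  proof (cases "i = Suc m")
    case True
    with Suc.prems have "seg.opt (Suc m) + ereal lam1 \<le> seg.min_block_cost (Suc m) a"
      by (simp add: Let_def INF Pstar_eq_min_block_cost)
    then show ?thesis
      using True by (simp add: Pstar_eq_min_block_cost P_eq_block_cost seg.min_block_cost_Suc_new_block)
  next
    case False
    with Suc.prems have i: "i < Suc m" and a: "a \<in> R z l u lam1 lam2 (Suc m) i"
      and "\<not> seg.opt (Suc m) + ereal lam1 \<le> seg.min_block_cost (Suc m) a"
      by (auto simp: Let_def INF Pstar_eq_min_block_cost)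
    then have "seg.min_block_cost (Suc m) a \<le> seg.opt (Suc m) + ereal lam1"
      by simp
    then show ?thesis
      using Suc.IH[OF i a] i
      by (simp add: Pstar_eq_min_block_cost P_eq_block_cost seg.min_block_cost_Suc_old_block)
  qed
qed

end

theorem proposition3p4:
  fixes z l u :: "nat \<Rightarrow> real" and lam1 lam2 :: real and n :: nat
  assumes "lam1 > 0" and "lam2 > 0"
    and "\<And>i. i \<in> {1..n} \<Longrightarrow> l i \<le> 0 \<and> 0 \<le> u i"
  shows "(1 \<le> n \<longrightarrow> (\<forall>a. Pstar z l u lam1 lam2 1 a
              = ereal ((1/2) * (a - z 1)^2) + omega l u lam2 1 a))
    \<and> (\<forall>s \<in> {2..n}. \<forall>a. Pstar z l u lam1 lam2 s a
          = min (Pstar z l u lam1 lam2 (s-1) a)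
                ((INF a'. Pstar z l u lam1 lam2 (s-1) a') + ereal lam1)
            + ereal ((1/2) * (a - z s)^2) + omega l u lam2 s a)
    \<and> (\<forall>s \<in> {2..n}. (\<Union>i\<in>{0..<s}. R z l u lam1 lam2 s i) = UNIV
          \<and> (\<forall>i\<in>{0..<s}. \<forall>j\<in>{0..<s}. i \<noteq> j \<longrightarrow>
                R z l u lam1 lam2 s i \<inter> R z l u lam1 lam2 s j = {}))
    \<and> (\<forall>s \<in> {1..n}. \<forall>i\<in>{0..<s}. \<forall>a \<in> R z l u lam1 lam2 s i.
          Pstar z l u lam1 lam2 s a = P z l u lam1 lam2 s i a)"
proof -
  have lam: "0 \<le> lam1" "0 \<le> lam2"
    using assms(1,2) by simp_all
  have Suc_Suc: "\<exists>m. s = Suc (Suc m)" if "s \<in> {2..n}" for s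
    using that by (intro exI[of _ "s - 2"]) auto
  have "\<forall>a. Pstar z l u lam1 lam2 1 a = ereal ((1/2) * (a - z 1)^2) + omega l u lam2 1 a"
    using Pstar_1[OF lam] unfolding stage_cost_def by blast
  moreover have "\<forall>s \<in> {2..n}. \<forall>a. Pstar z l u lam1 lam2 s a
      = min (Pstar z l u lam1 lam2 (s-1) a) ((INF a'. Pstar z l u lam1 lam2 (s-1) a') + ereal lam1)
        + ereal ((1/2) * (a - z s)^2) + omega l u lam2 s a"
    by (auto dest!: Suc_Suc simp: Pstar_Suc[OF lam] stage_cost_def add.assoc)
  moreover have "\<forall>s \<in> {2..n}. (\<Union>i\<in>{0..<s}. R z l u lam1 lam2 s i) = UNIV
      \<and> (\<forall>i\<in>{0..<s}. \<forall>j\<in>{0..<s}. i \<noteq> j \<longrightarrow> R z l u lam1 lam2 s i \<inter> R z l u lam1 lam2 s j = {})"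
    by (auto dest!: Suc_Suc dest: R_index_unique simp: UN_R simp del: R.simps)
  moreover have "\<forall>s \<in> {1..n}. \<forall>i\<in>{0..<s}. \<forall>a \<in> R z l u lam1 lam2 s i.
      Pstar z l u lam1 lam2 s a = P z l u lam1 lam2 s i a"
    by (auto dest!: less_imp_Suc_add intro!: Pstar_eq_P_on_R[OF lam] simp del: R.simps)
  ultimately show ?thesis by blast
qed

end
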